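(* Let $L$ be a positive integer, $A,B>0$, $a,b\in\mathbb R$. Let $x_1,\ldots,x_n\in\{-L,\ldots,L\}$, let $m<n$ and $\{i_1,\ldots,i_m\}\subset\{1,\ldots,n\}$, and put $y_k=x_{i_k}$. Then the law $\mathbb P^L_{x_1,\ldots,x_n}$ of the Label Process started from $n$ distinct labelled particles at $x_1,\ldots,x_n$, restricted to the class of events that depend only on the trajectories of the particles initially located at $x_{i_1},\ldots,x_{i_m}$, coincides with $\mathbb P^L_{y_1,\ldots,y_m}$. In particular, for any $1\le i\le n$ and any $\varepsilon_1,\ldots,\varepsilon_n\in\{\delta(-),\delta(+)\}$, $$\sum_{\varepsilon_i\in\{\delta(-),\delta(+)\}}p_L(x_1,\ldots,x_n;\varepsilon_1,\ldots,\varepsilon_n)=p_L(x_1,\ldots,x_{i-1},x_{i+1},\ldots,x_n;\varepsilon_1,\ldots,\varepsilon_{i-1},\varepsilon_{i+1},\ldots,\varepsilon_n).$$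
   Context: The Label Process on sites $\{-L,\ldots,L\}\cup\{\delta(-),\delta(+)\}$ evolves finitely many distinguishable (labelled) particles; several particles may occupy the same site. Each bond $\{k,k+1\}$, $k=-L,\ldots,L-1$, carries an independent rate-one Poisson clock; when it rings, with $N$ particles in total on sites $k,k+1$, one fixes a bijection between these particles and $\{1,\ldots,N\}$, chooses $U$ uniformly in $\{0,\ldots,N\}$ and independently a uniform permutation $\zeta$ of $\{1,\ldots,N\}$, and sends the particles corresponding to the first $U$ positions of $\zeta$ to site $k$ and the rest to site $k+1$. An independent Poisson clock of rate $A/L^a$ at site $-L$, when it rings, moves all particles at $-L$ to $\delta(-)$, and one of rate $B/L^b$ at site $L$ moves all particles at $L$ to $\delta(+)$; particles at $\delta(\pm)$ stay there forever. $\mathbb P^L_{x_1,\ldots,x_n}$ is the law of this process started with $n$ distinct particles at $x_1,\ldots,x_n$, and $p_L(x_1,\ldots,x_n;\varepsilon_1,\ldots,\varepsilon_n)$ is the $\mathbb P^L_{x_1,\ldots,x_n}$-probability that for every $i$ the particle starting at $x_i$ hits $\varepsilon_i$. *)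

theory Defs
  imports "HOL-Analysis.Analysis" "HOL-Probability.Probability_Mass_Function"
          "HOL-Combinatorics.Permutations"
begin

text \<open>Sites of the Label Process: S k for k in {-L..L}, Dm = delta(-), Dp = delta(+).
  A configuration of n labelled particles is a list of sites of length n
  (entry i = position of particle i).\<close>

datatype site = S int | Dm | Dp

definition sites :: "nat \<Rightarrow> site set" where
  "sites L = S ` {- int L .. int L} \<union> {Dm, Dp}"

definition states :: "nat \<Rightarrow> nat \<Rightarrow> site list set" where
  "states L n = {s. length s = n \<and> set s \<subseteq> sites L}"

definition bond_set :: "int \<Rightarrow> site list \<Rightarrow> nat set" where
  "bond_set k s = {i. i < length s \<and> (s ! i = S k \<or> s ! i = S (k + 1))}"

text \<open>The fixed bijection between the N particles on the bond and {1..N}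
  (order preserving in the labels).\<close>
definition lab :: "int \<Rightarrow> site list \<Rightarrow> nat \<Rightarrow> nat" where
  "lab k s i = card {j \<in> bond_set k s. j < i} + 1"

definition bond_move :: "int \<Rightarrow> site list \<Rightarrow> nat \<Rightarrow> (nat \<Rightarrow> nat) \<Rightarrow> site list" where
  "bond_move k s U \<zeta> =
     map (\<lambda>i. if i \<in> bond_set k s
               then (if lab k s i \<in> \<zeta> ` {1..U} then S k else S (k + 1))
               else s ! i) [0..<length s]"

definition bond_step :: "int \<Rightarrow> site list \<Rightarrow> site list pmf" where
  "bond_step k s =
     (let N = card (bond_set k s)
      in map_pmf (\<lambda>(U, \<zeta>). bond_move k s U \<zeta>)
           (pair_pmf (pmf_of_set {0..N}) (pmf_of_set {p. p permutes {1..N}})))"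

definition absorb_left :: "nat \<Rightarrow> site list \<Rightarrow> site list" where
  "absorb_left L s = map (\<lambda>z. if z = S (- int L) then Dm else z) s"

definition absorb_right :: "nat \<Rightarrow> site list \<Rightarrow> site list" where
  "absorb_right L s = map (\<lambda>z. if z = S (int L) then Dp else z) s"

text \<open>Total rate of all clocks (rate 1 per bond, A/L^a at -L, B/L^b at L).\<close>
definition total_rate :: "nat \<Rightarrow> real \<Rightarrow> real \<Rightarrow> real \<Rightarrow> real \<Rightarrow> real" where
  "total_rate L A B a b = 2 * real L + A / real L powr a + B / real L powr b"

text \<open>One-step kernel of the superposition of all clocks: the next ringing clock is
  chosen with probability proportional to its rate (uniformisation).\<close>
definition step_kernel ::
  "nat \<Rightarrow> real \<Rightarrow> real \<Rightarrow> real \<Rightarrow> real \<Rightarrow> site list \<Rightarrow> site list \<Rightarrow> real" where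
  "step_kernel L A B a b s s' =
     ((\<Sum>k\<in>{- int L .. int L - 1}. pmf (bond_step k s) s')
      + A / real L powr a * (if absorb_left L s = s' then 1 else 0)
      + B / real L powr b * (if absorb_right L s = s' then 1 else 0))
     / total_rate L A B a b"

primrec kernel_pow ::
  "nat \<Rightarrow> real \<Rightarrow> real \<Rightarrow> real \<Rightarrow> real \<Rightarrow> nat \<Rightarrow> site list \<Rightarrow> site list \<Rightarrow> real" where
  "kernel_pow L A B a b 0 s s' = (if s = s' then 1 else 0)"
| "kernel_pow L A B a b (Suc j) s s' =
     (\<Sum>u\<in>states L (length s). step_kernel L A B a b s u * kernel_pow L A B a b j u s')"

text \<open>Transition probability P(X_t = s' | X_0 = s) of the continuous-time process
  (all clocks superposed: Poisson(total_rate * t) many rings up to time t).\<close>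
definition trans_prob ::
  "nat \<Rightarrow> real \<Rightarrow> real \<Rightarrow> real \<Rightarrow> real \<Rightarrow> real \<Rightarrow> site list \<Rightarrow> site list \<Rightarrow> real" where
  "trans_prob L A B a b t s s' =
     (\<Sum>j. exp (- total_rate L A B a b * t) * (total_rate L A B a b * t) ^ j / fact j
            * kernel_pow L A B a b j s s')"

text \<open>Finite-dimensional distributions: probability, started from s at time t0,
  that X_{t_j} = s_j for all observations (t_j, s_j), times nondecreasing.\<close>
fun fdd ::
  "nat \<Rightarrow> real \<Rightarrow> real \<Rightarrow> real \<Rightarrow> real \<Rightarrow> site list \<Rightarrow> real \<Rightarrow> (real \<times> site list) list \<Rightarrow> real" where
  "fdd L A B a b s t0 [] = 1"
| "fdd L A B a b s t0 ((t, u) # obs) =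
     trans_prob L A B a b (t - t0) s u * fdd L A B a b u t obs"

text \<open>P^L_{x_1..x_n} of the cylinder event: for all j, the particles initially at
  x_{i_1},...,x_{i_m} (index list is) are at the positions z_j at time t_j.\<close>
definition sub_fdd ::
  "nat \<Rightarrow> real \<Rightarrow> real \<Rightarrow> real \<Rightarrow> real \<Rightarrow> int list \<Rightarrow> nat list \<Rightarrow> (real \<times> site list) list \<Rightarrow> real" where
  "sub_fdd L A B a b x is obs =
     (\<Sum>ss\<in>{ss. length ss = length obs \<and> set ss \<subseteq> states L (length x)
               \<and> map (\<lambda>s. map (\<lambda>i. s ! i) is) ss = map snd obs}.
        fdd L A B a b (map S x) 0 (zip (map fst obs) ss))"

text \<open>p_L(x; eps): probability that each particle i is eventually absorbed at eps_i.
  Since delta(+-) are absorbing, this is lim_{t->oo} P_x(X_t = eps).\<close>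
definition p_L ::
  "nat \<Rightarrow> real \<Rightarrow> real \<Rightarrow> real \<Rightarrow> real \<Rightarrow> int list \<Rightarrow> site list \<Rightarrow> real" where
  "p_L L A B a b x eps = Lim at_top (\<lambda>t. trans_prob L A B a b t (map S x) eps)"

end

theory Submission
  imports Defs
begin

text \<open>Both statements rest on the consistency of a single bond update. Given the number
  \<open>N\<close> of particles on a bond, the set of particles sent to the left site is
  exchangeable: a prescribed set of \<open>j\<close> particles is chosen with probability
  \<open>j! (N - j)! / (N + 1)!\<close>, and summing this over the possible fates of one particle
  gives the same formula with \<open>N - 1\<close>. Hence the image of the one-step kernel under
  forgetting some particles is the one-step kernel of the remaining ones; this lumping
  property passes to the powers of the kernel, to the Poisson-uniformised transition
  probabilities and to all finite-dimensional distributions.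

  For the absorption probabilities, forgetting particle \<open>i\<close> sums the probability of the
  target configuration over all positions of particle \<open>i\<close>. The positions inside the box
  contribute asymptotically nothing, because a single particle reaches \<open>\<delta>(-)\<close> within
  \<open>2 L + 1\<close> rings with probability bounded below, so it is absorbed almost surely.\<close>

section \<open>Counting permutations\<close>

lemma ex_permutes_image_eq:
  assumes "finite X" "Q \<subseteq> X" "Q' \<subseteq> X" "card Q = card Q'"
  shows "\<exists>\<tau>. \<tau> permutes X \<and> \<tau> ` Q = Q'"
proof -
  have fin: "finite Q" "finite Q'" "finite (X - Q)" "finite (X - Q')"
    using assms(1-3) finite_subset by auto
  obtain f where f: "bij_betw f Q Q'"
    using finite_same_card_bij[OF fin(1,2) assms(4)] by blast
  have "card (X - Q) = card (X - Q')"
    using assms fin by (simp add: card_Diff_subset)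
  then obtain g where g: "bij_betw g (X - Q) (X - Q')"
    using finite_same_card_bij[OF fin(3,4)] by blast
  define \<tau> where "\<tau> x = (if x \<in> Q then f x else if x \<in> X then g x else x)" for x
  have b1: "bij_betw \<tau> Q Q'"
    using f by (rule bij_betw_cong[THEN iffD1, rotated]) (simp add: \<tau>_def)
  have b2: "bij_betw \<tau> (X - Q) (X - Q')"
    using g by (rule bij_betw_cong[THEN iffD1, rotated]) (simp add: \<tau>_def)
  have "bij_betw \<tau> (Q \<union> (X - Q)) (Q' \<union> (X - Q'))"
    by (rule bij_betw_combine[OF b1 b2]) blast
  moreover have "Q \<union> (X - Q) = X" "Q' \<union> (X - Q') = X" using assms(2,3) by blast+
  moreover have "\<tau> x = x" if "x \<notin> X" for x using that assms(2) by (auto simp: \<tau>_def)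
  ultimately have "\<tau> permutes X" by (metis bij_imp_permutes)
  with b1 show ?thesis by (auto simp: bij_betw_def)
qed

lemma card_permutes_image_le:
  assumes "finite X" "Q \<subseteq> X" "Q' \<subseteq> X" "card Q = card Q'"
  shows "card {\<zeta>. \<zeta> permutes X \<and> \<zeta> ` I = Q} \<le> card {\<zeta>. \<zeta> permutes X \<and> \<zeta> ` I = Q'}"
proof -
  obtain \<tau> where \<tau>: "\<tau> permutes X" "\<tau> ` Q = Q'"
    using ex_permutes_image_eq[OF assms] by blast
  have "finite {\<zeta>. \<zeta> permutes X \<and> \<zeta> ` I = Q'}"
    using finite_permutations[OF assms(1)] by (rule finite_subset[rotated]) auto
  moreover have "inj_on ((\<circ>) \<tau>) {\<zeta>. \<zeta> permutes X \<and> \<zeta> ` I = Q}"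
    using permutes_inj[OF \<tau>(1)] by (auto intro!: inj_onI simp: fun_eq_iff inj_def)
  moreover have "(\<circ>) \<tau> ` {\<zeta>. \<zeta> permutes X \<and> \<zeta> ` I = Q} \<subseteq> {\<zeta>. \<zeta> permutes X \<and> \<zeta> ` I = Q'}"
    using \<tau> by (auto intro: permutes_compose simp: image_comp[symmetric])
  ultimately show ?thesis by (rule card_inj_on_le[rotated 2])
qed

text \<open>All fibres of \<open>\<zeta> \<mapsto> \<zeta> ` I\<close> have the same size, and there are
  \<open>card X choose card I\<close> of them.\<close>

lemma card_permutes_image_eq:
  assumes "finite X" "I \<subseteq> X" "Q \<subseteq> X" "card Q = card I"
  shows "card {\<zeta>. \<zeta> permutes X \<and> \<zeta> ` I = Q} = fact (card I) * fact (card X - card I)"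
proof -
  define c where "c = card {\<zeta>. \<zeta> permutes X \<and> \<zeta> ` I = Q}"
  define Qs where "Qs = {Q'. Q' \<subseteq> X \<and> card Q' = card I}"
  have fibre: "card {\<zeta>. \<zeta> permutes X \<and> \<zeta> ` I = Q'} = c" if "Q' \<in> Qs" for Q'
    using that assms unfolding c_def Qs_def by (intro antisym card_permutes_image_le) auto
  have image: "(\<lambda>\<zeta>. \<zeta> ` I) ` {\<zeta>. \<zeta> permutes X} \<subseteq> Qs"
  proof clarify
    fix \<zeta> assume "\<zeta> permutes X"
    then show "\<zeta> ` I \<in> Qs"
      using assms(2) permutes_image[of \<zeta> X] card_image[OF inj_on_subset[OF permutes_inj]]
      by (auto simp: Qs_def)
  qed
  have "fact (card X) = card {\<zeta>. \<zeta> permutes X}"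
    using card_permutations[OF refl assms(1)] by simp
  also have "\<dots> = (\<Sum>Q'\<in>Qs. card {\<zeta>\<in>{\<zeta>. \<zeta> permutes X}. \<zeta> ` I = Q'})"
    using sum.group[OF finite_permutations[OF assms(1)] _ image, of "\<lambda>_. 1::nat"] assms(1)
    by (simp add: Qs_def)
  also have "\<dots> = (card X choose card I) * c"
    using fibre n_subsets[OF assms(1)] by (simp add: Qs_def)
  finally have counted: "fact (card X) = (card X choose card I) * c" .
  have le: "card I \<le> card X" using assms card_mono by blast
  have "(card X choose card I) * c = (card X choose card I) * (fact (card I) * fact (card X - card I))"
    using binomial_fact_lemma[OF le] counted by (metis mult.commute)
  then show ?thesis using le unfolding c_def by simp
qed

section \<open>The law of the set sent to the left\<close>

text \<open>\<open>split_weight N j\<close> is the probability that a ring of a bond carrying \<open>N\<close> particles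
  sends a prescribed set of \<open>j\<close> of them to the left site: \<open>U = j\<close> with probability
  \<open>1 / (N + 1)\<close>, and then \<open>\<zeta>\<close> picks that set with probability \<open>1 / (N choose j)\<close>.\<close>

definition split_weight :: "nat \<Rightarrow> nat \<Rightarrow> real" where
  "split_weight N j = fact j * fact (N - j) / fact (Suc N)"

lemma split_weight_Suc:
  assumes "j \<le> N"
  shows "split_weight (Suc N) j + split_weight (Suc N) (Suc j) = split_weight N j"
proof -
  obtain d where N: "N = j + d" using assms le_Suc_ex by blast
  have left: "split_weight (Suc N) j = fact j * ((real d + 1) * fact d) / ((real N + 2) * fact (Suc N))"
    unfolding split_weight_def N
    by (simp add: Suc_diff_le fact_Suc[of d] fact_Suc[of "Suc (j + d)"] algebra_simps)
  have right: "split_weight (Suc N) (Suc j) = ((real j + 1) * fact j) * fact d / ((real N + 2) * fact (Suc N))"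
    unfolding split_weight_def N by (simp add: fact_Suc[of j] fact_Suc[of "Suc (j + d)"] algebra_simps)
  have "split_weight (Suc N) j + split_weight (Suc N) (Suc j)
      = fact j * fact d * (real N + 2) / ((real N + 2) * fact (Suc N))"
    unfolding left right using N by (simp add: add_divide_distrib[symmetric] algebra_simps)
  also have "\<dots> = fact j * fact d / fact (Suc N)"
    by (subst mult.commute[of "real N + 2"], rule mult_divide_mult_cancel_right) simp
  also have "\<dots> = split_weight N j"
    unfolding split_weight_def N by simp
  finally show ?thesis .
qed

lemma sum_Pow_split_weight:
  assumes "finite R" "q \<le> M"
  shows "(\<Sum>W\<in>Pow R. split_weight (M + card R) (q + card W)) = split_weight M q"
  using assms(1)
proof (induction R rule: finite_induct)
  case empty
  then show ?case by simp
next
  case (insert a R)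
  have disj: "Pow R \<inter> insert a ` Pow R = {}" using insert.hyps by auto
  have inj: "inj_on (insert a) (Pow R)" using insert.hyps by (auto simp: inj_on_def)
  have "(\<Sum>W\<in>Pow (insert a R). split_weight (M + card (insert a R)) (q + card W))
      = (\<Sum>W\<in>Pow R. split_weight (Suc (M + card R)) (q + card W))
        + (\<Sum>W\<in>insert a ` Pow R. split_weight (Suc (M + card R)) (q + card W))"
    unfolding Pow_insert using insert.hyps disj by (simp add: sum.union_disjoint)
  also have "(\<Sum>W\<in>insert a ` Pow R. split_weight (Suc (M + card R)) (q + card W))
      = (\<Sum>W\<in>Pow R. split_weight (Suc (M + card R)) (Suc (q + card W)))"
    using inj insert.hyps
    by (simp add: sum.reindex) (intro sum.cong refl, auto simp: card_insert_if finite_subset)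
  also have "(\<Sum>W\<in>Pow R. split_weight (Suc (M + card R)) (q + card W)) + \<dots>
      = (\<Sum>W\<in>Pow R. split_weight (M + card R) (q + card W))"
    unfolding sum.distrib[symmetric]
  proof (intro sum.cong refl)
    fix W assume "W \<in> Pow R"
    then have "card W \<le> card R" using insert.hyps card_mono by auto
    then show "split_weight (Suc (M + card R)) (q + card W) + split_weight (Suc (M + card R)) (Suc (q + card W))
        = split_weight (M + card R) (q + card W)"
      using assms(2) by (intro split_weight_Suc) simp
  qed
  finally show ?case using insert.IH by simp
qed

text \<open>Marginalising over the particles outside \<open>P\<close> leaves the same law for the
  particles in \<open>P\<close>.\<close>

lemma sum_Pow_split_weight_Int:
  assumes "finite B"
  shows "(\<Sum>T\<in>Pow B. h (T \<inter> P) * split_weight (card B) (card T))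
       = (\<Sum>Q\<in>Pow (B \<inter> P). h Q * split_weight (card (B \<inter> P)) (card Q))"
proof -
  let ?R = "B - P"
  have fin: "finite (B \<inter> P)" "finite ?R" using assms by auto
  have Pow_B: "Pow B = (\<lambda>(Q, W). Q \<union> W) ` (Pow (B \<inter> P) \<times> Pow ?R)"
  proof (intro set_eqI iffI)
    fix T assume "T \<in> Pow B"
    then show "T \<in> (\<lambda>(Q, W). Q \<union> W) ` (Pow (B \<inter> P) \<times> Pow ?R)"
      by (intro image_eqI[of _ _ "(T \<inter> P, T - P)"]) auto
  qed auto
  have inj: "inj_on (\<lambda>(Q, W). Q \<union> W) (Pow (B \<inter> P) \<times> Pow ?R)"
    by (rule inj_on_inverseI[where g = "\<lambda>T. (T \<inter> P, T - P)"]) auto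
  have card_B: "card B = card (B \<inter> P) + card ?R"
    using assms by (metis card_Int_Diff)
  have summand: "h ((Q \<union> W) \<inter> P) * split_weight (card B) (card (Q \<union> W))
      = h Q * split_weight (card (B \<inter> P) + card ?R) (card Q + card W)"
    if "Q \<subseteq> B \<inter> P" "W \<subseteq> ?R" for Q W
  proof -
    have "(Q \<union> W) \<inter> P = Q" using that by blast
    moreover have "card (Q \<union> W) = card Q + card W"
      using that assms by (intro card_Un_disjoint) (auto elim: finite_subset)
    ultimately show ?thesis using card_B by simp
  qed
  have "(\<Sum>T\<in>Pow B. h (T \<inter> P) * split_weight (card B) (card T))
      = (\<Sum>Q\<in>Pow (B \<inter> P). \<Sum>W\<in>Pow ?R.
           h Q * split_weight (card (B \<inter> P) + card ?R) (card Q + card W))"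
    unfolding Pow_B sum.reindex[OF inj] sum.cartesian_product
    by (intro sum.cong refl) (auto simp: summand)
  also have "\<dots> = (\<Sum>Q\<in>Pow (B \<inter> P). h Q * split_weight (card (B \<inter> P)) (card Q))"
    using fin by (intro sum.cong refl)
      (auto simp: sum_distrib_left[symmetric] sum_Pow_split_weight card_mono)
  finally show ?thesis .
qed

lemma sum_subsets_eq_sum_Pow:
  fixes f :: "'a set \<Rightarrow> real"
  assumes "finite X"
  shows "(\<Sum>T | T \<subseteq> X \<and> P T. f T) = (\<Sum>T\<in>Pow X. (if P T then 1 else 0) * f T)"
proof -
  have "(\<Sum>T\<in>Pow X. (if P T then 1 else 0) * f T) = (\<Sum>T\<in>Pow X. if P T then f T else 0)"
    by (rule sum.cong) simp_all
  then show ?thesis using sum.inter_filter[of "Pow X" f P] assms by simp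
qed

section \<open>Poisson mixtures\<close>

lemma pmf_map_eq_sum_fibre:
  assumes "finite C" "set_pmf p \<subseteq> C"
  shows "pmf (map_pmf f p) v = (\<Sum>u | u \<in> C \<and> f u = v. pmf p u)"
proof -
  have "f -` {v} \<inter> set_pmf p = {u. u \<in> C \<and> f u = v} \<inter> set_pmf p"
    using assms(2) by blast
  then have "measure p (f -` {v}) = measure p {u. u \<in> C \<and> f u = v}"
    by (metis measure_Int_set_pmf)
  then show ?thesis
    using assms(1) by (simp add: pmf_map measure_measure_pmf_finite)
qed

lemma weighted_suminf_dist_le:
  fixes w a :: "nat \<Rightarrow> real"
  assumes w: "\<And>j. 0 \<le> w j" "w sums 1"
    and bound: "\<And>j. \<bar>a j - q\<bar> \<le> M" and tail: "\<And>j. J \<le> j \<Longrightarrow> \<bar>a j - q\<bar> \<le> \<epsilon>"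
  shows "\<bar>(\<Sum>j. w j * a j) - q\<bar> \<le> \<epsilon> + M * (\<Sum>j<J. w j)"
proof -
  define g where "g j = w j * \<epsilon> + (if j \<in> {..<J} then w j * M else 0)" for j
  have g_sums: "g sums (1 * \<epsilon> + (\<Sum>j<J. w j * M))"
    unfolding g_def by (intro sums_add sums_mult2[OF w(2)] sums_If_finite_set) simp
  have dev_le: "norm (w j * (a j - q)) \<le> g j" for j
  proof -
    have "0 \<le> \<epsilon>" using tail[of J] by simp
    then have "\<bar>a j - q\<bar> \<le> (if j \<in> {..<J} then M + \<epsilon> else \<epsilon>)"
      using bound[of j] tail[of j] by auto
    then have "w j * \<bar>a j - q\<bar> \<le> w j * (if j \<in> {..<J} then M + \<epsilon> else \<epsilon>)"
      using w(1) by (rule mult_left_mono)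
    moreover have "norm (w j * (a j - q)) = w j * \<bar>a j - q\<bar>"
      using w(1)[of j] by (simp add: abs_mult)
    ultimately show ?thesis
      by (simp add: g_def algebra_simps split: if_splits)
  qed
  have norm_summable: "summable (\<lambda>j. norm (w j * (a j - q)))"
    using dev_le by (intro summable_comparison_test'[OF sums_summable[OF g_sums]]) auto
  then have dev_summable: "summable (\<lambda>j. w j * (a j - q))"
    by (rule summable_norm_cancel)
  have "(\<Sum>j. w j * a j) - q = (\<Sum>j. w j * (a j - q))"
  proof -
    have "(\<lambda>j. w j * (a j - q) + w j * q) sums ((\<Sum>j. w j * (a j - q)) + 1 * q)"
      by (intro sums_add summable_sums[OF dev_summable] sums_mult2[OF w(2)])
    then show ?thesis by (simp add: algebra_simps sums_iff)
  qed
  also have "\<bar>\<dots>\<bar> \<le> (\<Sum>j. norm (w j * (a j - q)))"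
    using summable_norm[OF norm_summable] by simp
  also have "\<dots> \<le> (\<Sum>j. g j)"
    by (rule suminf_le[OF dev_le norm_summable sums_summable[OF g_sums]])
  also have "\<dots> = \<epsilon> + M * (\<Sum>j<J. w j)"
    using g_sums by (simp add: sums_iff sum_distrib_left mult.commute)
  finally show ?thesis .
qed

definition poisson_weight :: "real \<Rightarrow> nat \<Rightarrow> real" where
  "poisson_weight \<mu> j = exp (- \<mu>) * \<mu> ^ j / fact j"

lemma poisson_weight_nonneg: "0 \<le> \<mu> \<Longrightarrow> 0 \<le> poisson_weight \<mu> j"
  by (simp add: poisson_weight_def)

lemma poisson_weight_sums: "poisson_weight \<mu> sums 1"
proof -
  have "(\<lambda>j. exp (- \<mu>) * (\<mu> ^ j /\<^sub>R fact j)) sums (exp (- \<mu>) * exp \<mu>)"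
    by (rule sums_mult[OF exp_converges])
  moreover have "(\<lambda>j. exp (- \<mu>) * (\<mu> ^ j /\<^sub>R fact j)) = poisson_weight \<mu>"
    by (simp add: fun_eq_iff poisson_weight_def divide_inverse mult.commute)
  ultimately show ?thesis by (simp add: exp_minus)
qed

lemma summable_abs_poisson_weight: "summable (\<lambda>j. \<bar>poisson_weight \<mu> j\<bar>)"
proof -
  have "summable (\<lambda>j. exp (- \<mu>) * (\<bar>\<mu>\<bar> ^ j /\<^sub>R fact j))"
    by (rule summable_mult[OF summable_exp_generic])
  moreover have "\<bar>poisson_weight \<mu> j\<bar> = exp (- \<mu>) * (\<bar>\<mu>\<bar> ^ j /\<^sub>R fact j)" for j
    by (simp add: poisson_weight_def abs_mult power_abs divide_inverse)
  ultimately show ?thesis by simp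
qed

lemma poisson_weight_tendsto_0: "((\<lambda>\<mu>. poisson_weight \<mu> j) \<longlongrightarrow> 0) at_top"
proof -
  have "((\<lambda>\<mu>::real. \<mu> ^ j / exp \<mu> / fact j) \<longlongrightarrow> 0 / fact j) at_top"
    by (rule tendsto_divide[OF tendsto_power_div_exp_0 tendsto_const]) simp
  then show ?thesis
    by (simp add: poisson_weight_def exp_minus divide_inverse mult.commute)
qed

lemma tendsto_poisson_mixture:
  fixes a :: "nat \<Rightarrow> real"
  assumes lim: "a \<longlonglongrightarrow> q"
  shows "((\<lambda>\<mu>. \<Sum>j. poisson_weight \<mu> j * a j) \<longlongrightarrow> q) at_top"
proof (rule tendstoI)
  fix \<epsilon> :: real assume \<epsilon>: "\<epsilon> > 0"
  have "Bseq (\<lambda>j. a j - q)"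
    using convergentI[OF tendsto_diff[OF lim tendsto_const]] by (rule convergent_imp_Bseq)
  then obtain M where M: "M > 0" "\<And>j. \<bar>a j - q\<bar> \<le> M"
    by (auto elim!: BseqE)
  obtain J where J: "\<And>j. J \<le> j \<Longrightarrow> \<bar>a j - q\<bar> \<le> \<epsilon> / 2"
    using lim \<epsilon> unfolding LIMSEQ_iff by (metis half_gt_zero less_imp_le real_norm_def)
  have "((\<lambda>\<mu>. \<Sum>j<J. poisson_weight \<mu> j) \<longlongrightarrow> (\<Sum>j<J. 0)) at_top"
    by (intro tendsto_sum poisson_weight_tendsto_0)
  then have "eventually (\<lambda>\<mu>. (\<Sum>j<J. poisson_weight \<mu> j) < \<epsilon> / (2 * M)) at_top"
    using \<epsilon> M by (simp add: order_tendsto_iff)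
  with eventually_ge_at_top[of 0]
  show "eventually (\<lambda>\<mu>. dist (\<Sum>j. poisson_weight \<mu> j * a j) q < \<epsilon>) at_top"
  proof eventually_elim
    case (elim \<mu>)
    have "\<bar>(\<Sum>j. poisson_weight \<mu> j * a j) - q\<bar> \<le> \<epsilon> / 2 + M * (\<Sum>j<J. poisson_weight \<mu> j)"
      using elim(1) M(2) J
      by (intro weighted_suminf_dist_le poisson_weight_nonneg poisson_weight_sums)
    also have "\<dots> < \<epsilon> / 2 + M * (\<epsilon> / (2 * M))"
      using mult_strict_left_mono[OF elim(2) M(1)] by simp
    also have "\<dots> = \<epsilon>" using M(1) by simp
    finally show ?case by (simp add: dist_real_def)
  qed
qed

section \<open>Consistency of a bond update\<close>

definition bond_split :: "int \<Rightarrow> site list \<Rightarrow> nat set \<Rightarrow> site list" where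
  "bond_split k s T =
     map (\<lambda>i. if i \<in> bond_set k s then (if i \<in> T then S k else S (k + 1)) else s ! i) [0..<length s]"

lemma finite_bond_set [simp]: "finite (bond_set k s)"
  by (rule finite_subset[of _ "{..<length s}"]) (auto simp: bond_set_def)

lemma length_bond_split [simp]: "length (bond_split k s T) = length s"
  by (simp add: bond_split_def)

lemma nth_bond_split:
  "i < length s \<Longrightarrow> bond_split k s T ! i =
     (if i \<in> bond_set k s then (if i \<in> T then S k else S (k + 1)) else s ! i)"
  by (simp add: bond_split_def)

lemma bond_split_eq_iff:
  "bond_split k s T = bond_split k s T' \<longleftrightarrow> T \<inter> bond_set k s = T' \<inter> bond_set k s"
proof
  assume "bond_split k s T = bond_split k s T'"
  then have "\<forall>i < length s. bond_split k s T ! i = bond_split k s T' ! i" by simp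
  then show "T \<inter> bond_set k s = T' \<inter> bond_set k s"
    by (auto simp: nth_bond_split bond_set_def split: if_splits)
next
  assume "T \<inter> bond_set k s = T' \<inter> bond_set k s"
  then have "i \<in> T \<longleftrightarrow> i \<in> T'" if "i \<in> bond_set k s" for i
    using that by blast
  then show "bond_split k s T = bond_split k s T'"
    unfolding bond_split_def by (intro map_cong) auto
qed

lemma inj_on_bond_split: "inj_on (bond_split k s) (Pow (bond_set k s))"
  by (rule inj_onI) (auto simp: bond_split_eq_iff)

lemma lab_less:
  assumes "i \<in> bond_set k s" "i' \<in> bond_set k s" "i < i'"
  shows "lab k s i < lab k s i'"
proof -
  have "{j \<in> bond_set k s. j < i} \<subset> {j \<in> bond_set k s. j < i'}"
    using assms by auto
  then show ?thesis
    unfolding lab_def by (simp add: psubset_card_mono)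
qed

lemma bij_betw_lab: "bij_betw (lab k s) (bond_set k s) {1..card (bond_set k s)}"
proof -
  have inj: "inj_on (lab k s) (bond_set k s)"
    by (rule inj_onI) (metis lab_less less_irrefl nat_neq_iff)
  have "lab k s i \<in> {1..card (bond_set k s)}" if "i \<in> bond_set k s" for i
  proof -
    have "{j \<in> bond_set k s. j < i} \<subset> bond_set k s" using that by auto
    then show ?thesis unfolding lab_def by (simp add: Suc_le_eq psubset_card_mono)
  qed
  then have "lab k s ` bond_set k s \<subseteq> {1..card (bond_set k s)}" by blast
  moreover have "card (lab k s ` bond_set k s) = card {1..card (bond_set k s)}"
    using card_image[OF inj] by simp
  ultimately show ?thesis
    using inj card_subset_eq[of "{1..card (bond_set k s)}"] by (simp add: bij_betw_def)
qed

lemma bond_move_eq_bond_split: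
  "bond_move k s U \<zeta> = bond_split k s {i \<in> bond_set k s. lab k s i \<in> \<zeta> ` {1..U}}"
  unfolding bond_move_def bond_split_def by (intro map_cong) auto

lemma bond_move_eq_bond_split_iff:
  assumes "U \<le> card (bond_set k s)" "\<zeta> permutes {1..card (bond_set k s)}" "T \<subseteq> bond_set k s"
  shows "bond_move k s U \<zeta> = bond_split k s T \<longleftrightarrow> U = card T \<and> \<zeta> ` {1..U} = lab k s ` T"
proof -
  let ?B = "bond_set k s" and ?X = "\<zeta> ` {1..U}"
  have bij: "bij_betw (lab k s) ?B {1..card ?B}" by (rule bij_betw_lab)
  have X: "?X \<subseteq> lab k s ` ?B"
    using permutes_image[OF assms(2)] assms(1) bij by (auto simp: bij_betw_def)
  have card_X: "card ?X = U"
    using card_image[OF inj_on_subset[OF permutes_inj[OF assms(2)]]] by simp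
  have card_T: "card (lab k s ` T) = card T"
    using card_image inj_on_subset[OF bij_betw_imp_inj_on[OF bij] assms(3)] by blast
  have "bond_move k s U \<zeta> = bond_split k s T \<longleftrightarrow> {i \<in> ?B. lab k s i \<in> ?X} = T"
    unfolding bond_move_eq_bond_split bond_split_eq_iff using assms(3) by blast
  also have "\<dots> \<longleftrightarrow> ?X = lab k s ` T"
  proof
    assume preimage: "{i \<in> ?B. lab k s i \<in> ?X} = T"
    have "?X \<subseteq> lab k s ` {i \<in> ?B. lab k s i \<in> ?X}"
    proof
      fix y assume "y \<in> ?X"
      moreover obtain i where "i \<in> ?B" "y = lab k s i" using X \<open>y \<in> ?X\<close> by blast
      ultimately show "y \<in> lab k s ` {i \<in> ?B. lab k s i \<in> ?X}"
        by (intro image_eqI[of _ _ i]) simp_all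
    qed
    then have "lab k s ` {i \<in> ?B. lab k s i \<in> ?X} = ?X" by blast
    then show "?X = lab k s ` T" using preimage by simp
  next
    assume "?X = lab k s ` T"
    then show "{i \<in> ?B. lab k s i \<in> ?X} = T"
      using assms(3) inj_onD[OF bij_betw_imp_inj_on[OF bij]] by auto
  qed
  finally show ?thesis using card_X card_T by auto
qed

lemma set_pmf_bond_step: "set_pmf (bond_step k s) \<subseteq> bond_split k s ` Pow (bond_set k s)"
proof -
  have "{p. p permutes {1..card (bond_set k s)}} \<noteq> {}" using permutes_id by blast
  then show ?thesis
    unfolding bond_step_def Let_def by (auto simp: bond_move_eq_bond_split)
qed

lemma pmf_bond_step_bond_split:
  assumes T: "T \<subseteq> bond_set k s"
  shows "pmf (bond_step k s) (bond_split k s T) = split_weight (card (bond_set k s)) (card T)"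
proof -
  define N where "N = card (bond_set k s)"
  define Pm where "Pm = {p. p permutes {1..N}}"
  define g where "g = (\<lambda>(U, \<zeta>). bond_move k s U \<zeta>)"
  let ?P = "pair_pmf (pmf_of_set {0..N}) (pmf_of_set Pm)"
  let ?E = "g -` {bond_split k s T} \<inter> ({0..N} \<times> Pm)"
  have Pm: "Pm \<noteq> {}" "finite Pm" "card Pm = fact N"
    unfolding Pm_def using permutes_id[of "{1..N}"] finite_permutations[of "{1..N}"]
    by (blast, simp, simp add: card_permutations)
  have card_T: "card T \<le> N" "card (lab k s ` T) = card T" "lab k s ` T \<subseteq> {1..N}"
    using card_mono[OF finite_bond_set T] bij_betw_lab[of k s] T
      card_image[OF inj_on_subset[OF bij_betw_imp_inj_on[OF bij_betw_lab] T]]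
    by (auto simp: N_def bij_betw_def)
  have "?E = {card T} \<times> {\<zeta>. \<zeta> permutes {1..N} \<and> \<zeta> ` {1..card T} = lab k s ` T}"
  proof (intro set_eqI)
    fix x :: "nat \<times> (nat \<Rightarrow> nat)"
    obtain U \<zeta> where x: "x = (U, \<zeta>)" by fastforce
    show "x \<in> ?E \<longleftrightarrow> x \<in> {card T} \<times> {\<zeta>. \<zeta> permutes {1..N} \<and> \<zeta> ` {1..card T} = lab k s ` T}"
      using bond_move_eq_bond_split_iff[OF _ _ T, of U \<zeta>] card_T(1)
      unfolding x g_def Pm_def N_def by auto
  qed
  then have card_E: "card ?E = fact (card T) * fact (N - card T)"
    using card_permutes_image_eq[of "{1..N}" "{1..card T}" "lab k s ` T"] card_T
    by (simp add: card_cartesian_product)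
  have "pmf (bond_step k s) (bond_split k s T) = measure ?P (g -` {bond_split k s T})"
    unfolding bond_step_def Let_def N_def[symmetric] Pm_def[symmetric] g_def pmf_map ..
  also have "\<dots> = measure ?P ?E"
    using Pm(1,2) by (subst measure_Int_set_pmf[symmetric]) simp
  also have "\<dots> = (\<Sum>x\<in>?E. pmf ?P x)"
    using Pm(2) by (intro measure_measure_pmf_finite) simp
  also have "\<dots> = (\<Sum>x\<in>?E. 1 / (real (Suc N) * fact N))"
    using Pm by (intro sum.cong refl) (auto simp: pmf_pair pmf_of_set[OF Pm(1,2)] indicator_def)
  also have "\<dots> = split_weight N (card T)"
    using card_E by (simp add: split_weight_def)
  finally show ?thesis unfolding N_def .
qed

lemma prob_bond_step:
  "measure_pmf.prob (bond_step k s) X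
     = (\<Sum>T | T \<subseteq> bond_set k s \<and> bond_split k s T \<in> X. split_weight (card (bond_set k s)) (card T))"
proof -
  let ?C = "bond_split k s ` Pow (bond_set k s)"
  have "measure_pmf.prob (bond_step k s) X = measure_pmf.prob (bond_step k s) (X \<inter> ?C)"
  proof -
    have "X \<inter> ?C \<inter> set_pmf (bond_step k s) = X \<inter> set_pmf (bond_step k s)"
      using set_pmf_bond_step[of k s] by blast
    then show ?thesis by (metis measure_Int_set_pmf)
  qed
  also have "\<dots> = (\<Sum>u\<in>X \<inter> ?C. pmf (bond_step k s) u)"
    by (intro measure_measure_pmf_finite) simp
  also have "X \<inter> ?C = bond_split k s ` {T. T \<subseteq> bond_set k s \<and> bond_split k s T \<in> X}"
    by auto
  also have "(\<Sum>u\<in>\<dots>. pmf (bond_step k s) u)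
      = (\<Sum>T | T \<subseteq> bond_set k s \<and> bond_split k s T \<in> X. pmf (bond_step k s) (bond_split k s T))"
  proof -
    have "inj_on (bond_split k s) {T. T \<subseteq> bond_set k s \<and> bond_split k s T \<in> X}"
      by (rule inj_on_subset[OF inj_on_bond_split]) blast
    then show ?thesis by (simp add: sum.reindex)
  qed
  also have "\<dots> = (\<Sum>T | T \<subseteq> bond_set k s \<and> bond_split k s T \<in> X.
                      split_weight (card (bond_set k s)) (card T))"
    by (intro sum.cong refl pmf_bond_step_bond_split) blast
  finally show ?thesis .
qed

definition proj :: "nat list \<Rightarrow> site list \<Rightarrow> site list" where
  "proj ps s = map (\<lambda>i. s ! i) ps"

lemma length_proj [simp]: "length (proj ps s) = length ps"
  by (simp add: proj_def)

lemma nth_proj [simp]: "p < length ps \<Longrightarrow> proj ps s ! p = s ! (ps ! p)"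
  by (simp add: proj_def)

lemma bond_set_proj:
  assumes "set ps \<subseteq> {..<length s}"
  shows "bond_set k (proj ps s) = {p. p < length ps \<and> ps ! p \<in> bond_set k s}"
  using assms nth_mem by (fastforce simp: bond_set_def)

lemma proj_bond_split:
  assumes "set ps \<subseteq> {..<length s}"
  shows "proj ps (bond_split k s T) = bond_split k (proj ps s) {p. p < length ps \<and> ps ! p \<in> T}"
proof (rule nth_equalityI)
  fix p assume "p < length (proj ps (bond_split k s T))"
  then have "p < length ps" "ps ! p < length s" using assms nth_mem by fastforce+
  then show "proj ps (bond_split k s T) ! p = bond_split k (proj ps s) {p. p < length ps \<and> ps ! p \<in> T} ! p"
    using bond_set_proj[OF assms] by (simp add: nth_bond_split)
qed simp

lemma map_pmf_proj_bond_step: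
  assumes "distinct ps" and "set ps \<subseteq> {..<length s}"
  shows "map_pmf (proj ps) (bond_step k s) = bond_step k (proj ps s)"
proof (rule pmf_eqI)
  fix v
  define B where "B = bond_set k s"
  define B' where "B' = bond_set k (proj ps s)"
  define idx where "idx T = {p. p < length ps \<and> ps ! p \<in> T}" for T
  define h where "h Q = (if bond_split k (proj ps s) (idx Q) = v then 1 else 0 :: real)" for Q
  have idx_image: "idx ((!) ps ` T') = T'" if "T' \<subseteq> B'" for T'
    using that assms(1) by (auto simp: idx_def B'_def bond_set_proj[OF assms(2)] nth_eq_iff_index_eq)
  have bij: "bij_betw ((!) ps) B' (B \<inter> set ps)"
  proof (rule bij_betw_imageI)
    show "inj_on ((!) ps) B'"
      using assms(1) by (auto simp: inj_on_def B'_def bond_set_proj[OF assms(2)] nth_eq_iff_index_eq)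
    show "(!) ps ` B' = B \<inter> set ps"
      by (auto simp: B_def B'_def bond_set_proj[OF assms(2)] in_set_conv_nth)
  qed
  have card_image: "card ((!) ps ` T') = card T'" if "T' \<subseteq> B'" for T'
    using card_image[OF inj_on_subset[OF bij_betw_imp_inj_on[OF bij] that]] .
  have "pmf (map_pmf (proj ps) (bond_step k s)) v
      = (\<Sum>T | T \<subseteq> B \<and> proj ps (bond_split k s T) = v. split_weight (card B) (card T))"
    unfolding pmf_map prob_bond_step B_def by simp
  also have "\<dots> = (\<Sum>T\<in>Pow B. h (T \<inter> set ps) * split_weight (card B) (card T))"
  proof -
    have "idx (T \<inter> set ps) = idx T" for T by (auto simp: idx_def)
    then show ?thesis
      unfolding h_def proj_bond_split[OF assms(2)] idx_def[symmetric]
      by (simp add: sum_subsets_eq_sum_Pow B_def)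
  qed
  also have "\<dots> = (\<Sum>Q\<in>Pow (B \<inter> set ps). h Q * split_weight (card (B \<inter> set ps)) (card Q))"
    unfolding B_def by (rule sum_Pow_split_weight_Int) simp
  also have "\<dots> = (\<Sum>T'\<in>Pow B'. h ((!) ps ` T') * split_weight (card (B \<inter> set ps)) (card ((!) ps ` T')))"
    by (rule sum.reindex_bij_betw[OF bij_betw_Pow[OF bij], symmetric])
  also have "\<dots> = (\<Sum>T'\<in>Pow B'. h ((!) ps ` T') * split_weight (card B') (card T'))"
    using card_image bij_betw_same_card[OF bij] by (intro sum.cong refl) auto
  also have "\<dots> = (\<Sum>T' | T' \<subseteq> B' \<and> bond_split k (proj ps s) T' \<in> {v}. split_weight (card B') (card T'))"
    by (simp add: h_def idx_image sum_subsets_eq_sum_Pow B'_def)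
  also have "\<dots> = pmf (bond_step k (proj ps s)) v"
    unfolding B'_def prob_bond_step[symmetric] by (simp add: measure_pmf_single)
  finally show "pmf (map_pmf (proj ps) (bond_step k s)) v = pmf (bond_step k (proj ps s)) v" .
qed

section \<open>Lumping\<close>

lemma finite_states [simp]: "finite (states L n)"
proof -
  have "states L n = {xs. set xs \<subseteq> sites L \<and> length xs = n}" by (auto simp: states_def)
  then show ?thesis using finite_lists_length_eq[of "sites L" n] by (simp add: sites_def)
qed

lemma length_states: "s \<in> states L n \<Longrightarrow> length s = n"
  by (simp add: states_def)

lemma in_statesI: "length s = n \<Longrightarrow> (\<And>i. i < n \<Longrightarrow> s ! i \<in> sites L) \<Longrightarrow> s \<in> states L n"
  by (auto simp: states_def in_set_conv_nth)

lemma nth_states: "s \<in> states L n \<Longrightarrow> i < n \<Longrightarrow> s ! i \<in> sites L"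
  by (auto simp: states_def)

lemma map_S_in_states:
  "\<forall>xi \<in> set x. - int L \<le> xi \<and> xi \<le> int L \<Longrightarrow> map S x \<in> states L (length x)"
  by (auto simp: states_def sites_def)

lemma absorbed_in_states: "set e \<subseteq> {Dm, Dp} \<Longrightarrow> e \<in> states L (length e)"
  by (auto simp: states_def sites_def)

lemma bond_split_in_states:
  assumes "s \<in> states L n" "- int L \<le> k" "k < int L"
  shows "bond_split k s T \<in> states L n"
  using assms length_states[OF assms(1)] nth_states[OF assms(1)]
  by (intro in_statesI) (auto simp: nth_bond_split sites_def)

lemma set_pmf_bond_step_states:
  assumes "s \<in> states L n" "- int L \<le> k" "k < int L"
  shows "set_pmf (bond_step k s) \<subseteq> states L n"
  using set_pmf_bond_step[of k s] bond_split_in_states[OF assms] by blast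

lemma proj_in_states:
  assumes "s \<in> states L n" "set ps \<subseteq> {..<n}"
  shows "proj ps s \<in> states L (length ps)"
  using assms nth_mem by (intro in_statesI) (auto intro: nth_states)

lemma absorb_left_in_states: "s \<in> states L n \<Longrightarrow> absorb_left L s \<in> states L n"
  by (auto simp: absorb_left_def states_def sites_def)

lemma absorb_right_in_states: "s \<in> states L n \<Longrightarrow> absorb_right L s \<in> states L n"
  by (auto simp: absorb_right_def states_def sites_def)

lemma proj_absorb_left: "set ps \<subseteq> {..<length s} \<Longrightarrow> proj ps (absorb_left L s) = absorb_left L (proj ps s)"
  by (auto simp: proj_def absorb_left_def)

lemma proj_absorb_right: "set ps \<subseteq> {..<length s} \<Longrightarrow> proj ps (absorb_right L s) = absorb_right L (proj ps s)"
  by (auto simp: proj_def absorb_right_def)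

lemma proj_delete:
  "i < length u \<Longrightarrow> proj ([0..<i] @ [Suc i..<length u]) u = take i u @ drop (Suc i) u"
  by (auto simp: proj_def intro!: nth_equalityI simp: nth_append min_def)

lemma fibre_delete:
  assumes "set e \<subseteq> {Dm, Dp}" "length e = n" "i < n"
  shows "{u. u \<in> states L n \<and> take i u @ drop (Suc i) u = take i e @ drop (Suc i) e}
       = (\<lambda>z. e[i := z]) ` sites L"
proof (intro set_eqI iffI)
  fix u assume "u \<in> {u. u \<in> states L n \<and> take i u @ drop (Suc i) u = take i e @ drop (Suc i) e}"
  then have u: "u \<in> states L n" "take i u @ drop (Suc i) u = take i e @ drop (Suc i) e" by auto
  have "take i u = take i e" "drop (Suc i) u = drop (Suc i) e"
    using u(2) length_states[OF u(1)] assms(2,3) by auto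
  then have "u = e[i := u ! i]"
    using id_take_nth_drop[of i u] upd_conv_take_nth_drop[of i e] length_states[OF u(1)] assms(2,3)
    by simp
  moreover have "u ! i \<in> sites L" using nth_states[OF u(1) assms(3)] .
  ultimately show "u \<in> (\<lambda>z. e[i := z]) ` sites L" by blast
next
  fix u assume "u \<in> (\<lambda>z. e[i := z]) ` sites L"
  then obtain z where "z \<in> sites L" "u = e[i := z]" by blast
  moreover have "set (e[i := z]) \<subseteq> insert z (set e)" by (rule set_update_subset_insert)
  ultimately show "u \<in> {u. u \<in> states L n \<and> take i u @ drop (Suc i) u = take i e @ drop (Suc i) e}"
    using assms by (auto simp: states_def sites_def)
qed

lemma sum_fibre_step_kernel:
  assumes s: "s \<in> states L n" and ps: "set ps \<subseteq> {..<n}" "distinct ps"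
  shows "(\<Sum>u | u \<in> states L n \<and> proj ps u = v. step_kernel L A B a b s u)
       = step_kernel L A B a b (proj ps s) v"
proof -
  let ?U = "{u. u \<in> states L n \<and> proj ps u = v}"
  have ps_s: "set ps \<subseteq> {..<length s}" using ps(1) length_states[OF s] by simp
  have bond: "(\<Sum>u\<in>?U. pmf (bond_step k s) u) = pmf (bond_step k (proj ps s)) v"
    if "k \<in> {- int L .. int L - 1}" for k
    using that pmf_map_eq_sum_fibre[OF finite_states set_pmf_bond_step_states[OF s], of k "proj ps" v]
      map_pmf_proj_bond_step[OF ps(2) ps_s, of k] by simp
  have left: "(\<Sum>u\<in>?U. if absorb_left L s = u then 1 else 0 :: real)
      = (if absorb_left L (proj ps s) = v then 1 else 0)"
    using absorb_left_in_states[OF s] proj_absorb_left[OF ps_s] by simp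
  have right: "(\<Sum>u\<in>?U. if absorb_right L s = u then 1 else 0 :: real)
      = (if absorb_right L (proj ps s) = v then 1 else 0)"
    using absorb_right_in_states[OF s] proj_absorb_right[OF ps_s] by simp
  have bonds: "(\<Sum>u\<in>?U. \<Sum>k\<in>{- int L .. int L - 1}. pmf (bond_step k s) u)
      = (\<Sum>k\<in>{- int L .. int L - 1}. pmf (bond_step k (proj ps s)) v)"
    by (subst sum.swap) (rule sum.cong[OF refl bond])
  show ?thesis
    unfolding step_kernel_def sum_divide_distrib[symmetric] sum.distrib
      sum_distrib_left[symmetric] left right bonds ..
qed

lemma sum_fibre_kernel_pow:
  assumes "s \<in> states L n" "set ps \<subseteq> {..<n}" "distinct ps"
  shows "(\<Sum>u | u \<in> states L n \<and> proj ps u = v. kernel_pow L A B a b j s u)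
       = kernel_pow L A B a b j (proj ps s) v"
  using assms(1)
proof (induction j arbitrary: s v)
  case 0
  then show ?case by simp
next
  case (Suc j)
  let ?P = "step_kernel L A B a b" and ?K = "kernel_pow L A B a b j"
  have "(\<Sum>u | u \<in> states L n \<and> proj ps u = v. kernel_pow L A B a b (Suc j) s u)
      = (\<Sum>w\<in>states L n. ?P s w * (\<Sum>u | u \<in> states L n \<and> proj ps u = v. ?K w u))"
    by (simp add: length_states[OF Suc.prems] sum_distrib_left) (rule sum.swap)
  also have "\<dots> = (\<Sum>w\<in>states L n. ?P s w * ?K (proj ps w) v)"
    by (intro sum.cong refl) (simp add: Suc.IH)
  also have "\<dots> = (\<Sum>v'\<in>states L (length ps).
                      \<Sum>w | w \<in> states L n \<and> proj ps w = v'. ?P s w * ?K (proj ps w) v)"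
    by (rule sum.group[symmetric]) (use proj_in_states[OF _ assms(2)] in auto)
  also have "\<dots> = (\<Sum>v'\<in>states L (length ps). (\<Sum>w | w \<in> states L n \<and> proj ps w = v'. ?P s w) * ?K v' v)"
    by (intro sum.cong refl) (simp add: sum_distrib_right)
  also have "\<dots> = (\<Sum>v'\<in>states L (length ps). ?P (proj ps s) v' * ?K v' v)"
    by (simp add: sum_fibre_step_kernel[OF Suc.prems assms(2,3)])
  finally show ?case by simp
qed

lemma kernel_pow_add:
  assumes "s \<in> states L n"
  shows "kernel_pow L A B a b (j + D) s u
       = (\<Sum>w\<in>states L n. kernel_pow L A B a b j s w * kernel_pow L A B a b D w u)"
  using assms
proof (induction j arbitrary: s)
  case 0
  then show ?case by (simp add: length_states if_distrib[of "\<lambda>c. c * _"] cong: if_cong)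
next
  case (Suc j)
  let ?P = "step_kernel L A B a b" and ?K = "kernel_pow L A B a b"
  have "?K (Suc j + D) s u = (\<Sum>w\<in>states L n. ?P s w * (\<Sum>w'\<in>states L n. ?K j w w' * ?K D w' u))"
    by (simp add: length_states[OF Suc.prems] Suc.IH)
  also have "\<dots> = (\<Sum>w'\<in>states L n. (\<Sum>w\<in>states L n. ?P s w * ?K j w w') * ?K D w' u)"
    by (simp add: sum_distrib_left sum_distrib_right mult.assoc) (rule sum.swap)
  finally show ?case by (simp add: length_states[OF Suc.prems])
qed

lemma bond_step_absorbed:
  assumes "set e \<subseteq> {Dm, Dp}"
  shows "bond_step k e = return_pmf e"
proof -
  have "bond_set k e = {}"
    using assms by (auto simp: bond_set_def dest!: nth_mem)
  then have "(\<lambda>(U, \<zeta>). bond_move k e U \<zeta>) = (\<lambda>_. e)"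
    by (auto simp: bond_move_def map_nth)
  then show ?thesis by (simp add: bond_step_def Let_def)
qed

lemma trans_prob_eq:
  "trans_prob L A B a b t s u
     = (\<Sum>j. poisson_weight (total_rate L A B a b * t) j * kernel_pow L A B a b j s u)"
  by (simp add: trans_prob_def poisson_weight_def)

section \<open>The sub-family is a Label Process\<close>

locale label_process =
  fixes L :: nat and A B a b :: real
  assumes L_pos: "L > 0" and A_pos: "A > 0" and B_pos: "B > 0"
begin

abbreviation "rate \<equiv> total_rate L A B a b"
abbreviation "step \<equiv> step_kernel L A B a b"
abbreviation "kpow \<equiv> kernel_pow L A B a b"

lemma rate_pos: "rate > 0"
  using L_pos A_pos B_pos by (simp add: total_rate_def add_pos_pos)

lemma step_nonneg: "0 \<le> step s u"
  using rate_pos A_pos B_pos unfolding step_kernel_def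
  by (intro divide_nonneg_pos add_nonneg_nonneg sum_nonneg) auto

lemma kpow_nonneg: "0 \<le> kpow j s u"
  by (induction j arbitrary: s) (auto intro!: sum_nonneg mult_nonneg_nonneg step_nonneg)

lemma step_Nil: "step [] [] = 1"
proof -
  have "(\<lambda>(U, \<zeta>). bond_move k [] U \<zeta>) = (\<lambda>_. [])" for k
    by (auto simp: bond_move_def)
  then have "bond_step k [] = return_pmf []" for k
    by (simp add: bond_step_def Let_def)
  then show ?thesis
    using rate_pos by (simp add: step_kernel_def absorb_left_def absorb_right_def total_rate_def)
qed

text \<open>Every configuration projects onto the empty family of particles, so summing over
  the fibre of \<open>[]\<close> shows that the kernels are stochastic.\<close>

lemma sum_step: "s \<in> states L n \<Longrightarrow> (\<Sum>u\<in>states L n. step s u) = 1"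
  using sum_fibre_step_kernel[where ps = "[]" and v = "[]"] step_Nil by (simp add: proj_def)

lemma sum_kpow: "s \<in> states L n \<Longrightarrow> (\<Sum>u\<in>states L n. kpow j s u) = 1"
proof -
  have "states L 0 = {[]}" by (auto simp: states_def)
  then have "kpow j [] [] = 1" by (induction j) (simp_all add: step_Nil)
  then show "s \<in> states L n \<Longrightarrow> ?thesis"
    using sum_fibre_kernel_pow[where ps = "[]" and v = "[]"] by (simp add: proj_def)
qed

lemma kpow_le_1: "s \<in> states L n \<Longrightarrow> kpow j s u \<le> 1"
proof (induction j arbitrary: s)
  case (Suc j)
  have "kpow (Suc j) s u \<le> (\<Sum>w\<in>states L n. step s w * 1)"
    unfolding kernel_pow.simps length_states[OF Suc.prems]
    by (intro sum_mono mult_left_mono Suc.IH step_nonneg)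
  also have "\<dots> = 1" using sum_step[OF Suc.prems] by simp
  finally show ?case .
qed simp

lemma summable_trans_prob:
  assumes "s \<in> states L n"
  shows "summable (\<lambda>j. poisson_weight (rate * t) j * kpow j s u)"
proof (rule summable_comparison_test'[OF summable_abs_poisson_weight])
  fix j
  show "norm (poisson_weight (rate * t) j * kpow j s u) \<le> \<bar>poisson_weight (rate * t) j\<bar>"
    using kpow_nonneg kpow_le_1[OF assms] by (simp add: abs_mult mult_left_le)
qed

lemma sum_fibre_trans_prob:
  assumes "s \<in> states L n" "set ps \<subseteq> {..<n}" "distinct ps"
  shows "(\<Sum>u | u \<in> states L n \<and> proj ps u = v. trans_prob L A B a b t s u)
       = trans_prob L A B a b t (proj ps s) v"
  unfolding trans_prob_eq
  by (subst suminf_sum[symmetric])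
    (simp_all add: summable_trans_prob[OF assms(1)] sum_distrib_left[symmetric]
      sum_fibre_kernel_pow[OF assms(1-3)])

lemma sum_fibre_fdd:
  assumes "s \<in> states L n" "set ps \<subseteq> {..<n}" "distinct ps"
  shows "(\<Sum>ss | length ss = length obs \<and> set ss \<subseteq> states L n \<and> map (proj ps) ss = map snd obs.
            fdd L A B a b s t0 (zip (map fst obs) ss))
       = fdd L A B a b (proj ps s) t0 obs"
  using assms(1)
proof (induction obs arbitrary: s t0)
  case Nil
  have "{ss. length ss = 0 \<and> set ss \<subseteq> states L n \<and> map (proj ps) ss = []} = {[]}" by auto
  then show ?case by simp
next
  case (Cons ob obs)
  obtain t v where ob: "ob = (t, v)" by fastforce
  define U where "U = {u. u \<in> states L n \<and> proj ps u = v}"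
  define SS where "SS = {ss. length ss = length obs \<and> set ss \<subseteq> states L n \<and> map (proj ps) ss = map snd obs}"
  have paths: "{ss. length ss = length (ob # obs) \<and> set ss \<subseteq> states L n
                  \<and> map (proj ps) ss = map snd (ob # obs)} = (\<lambda>(u, ss). u # ss) ` (U \<times> SS)"
    by (auto simp: ob U_def SS_def length_Suc_conv)
  have inj: "inj_on (\<lambda>(u, ss). u # ss) (U \<times> SS)" by (auto simp: inj_on_def)
  have "(\<Sum>ss | length ss = length (ob # obs) \<and> set ss \<subseteq> states L n
                  \<and> map (proj ps) ss = map snd (ob # obs). fdd L A B a b s t0 (zip (map fst (ob # obs)) ss))
      = (\<Sum>(u, ss)\<in>U \<times> SS. fdd L A B a b s t0 (zip (map fst (ob # obs)) (u # ss)))"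
    unfolding paths by (subst sum.reindex[OF inj]) (simp add: case_prod_unfold)
  also have "\<dots> = (\<Sum>u\<in>U. trans_prob L A B a b (t - t0) s u * fdd L A B a b (proj ps u) t obs)"
    unfolding sum.cartesian_product[symmetric] using ob Cons.IH
    by (auto simp: sum_distrib_left[symmetric] SS_def U_def intro!: sum.cong)
  also have "\<dots> = (\<Sum>u\<in>U. trans_prob L A B a b (t - t0) s u) * fdd L A B a b v t obs"
    unfolding sum_distrib_right U_def by (intro sum.cong refl) auto
  also have "\<dots> = fdd L A B a b (proj ps s) t0 (ob # obs)"
    unfolding U_def sum_fibre_trans_prob[OF Cons.prems assms(2,3)] using ob by simp
  finally show ?case .
qed

theorem sub_fdd_eq_fdd:
  assumes "\<forall>xi \<in> set x. - int L \<le> xi \<and> xi \<le> int L" "distinct ps" "\<forall>i \<in> set ps. i < length x"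
  shows "sub_fdd L A B a b x ps obs = fdd L A B a b (map S (map (\<lambda>i. x ! i) ps)) 0 obs"
proof -
  have "proj ps (map S x) = map S (map (\<lambda>i. x ! i) ps)"
    using assms(3) by (simp add: proj_def)
  moreover have "(\<lambda>s. map (\<lambda>i. s ! i) ps) = proj ps" by (simp add: fun_eq_iff proj_def)
  ultimately show ?thesis
    unfolding sub_fdd_def using sum_fibre_fdd[OF map_S_in_states[OF assms(1)] _ assms(2)] assms(3)
    by (simp add: subset_iff)
qed

section \<open>Absorption probabilities\<close>

lemma step_absorbed:
  assumes "set e \<subseteq> {Dm, Dp}"
  shows "step e e = 1"
proof -
  have "absorb_left L e = e" "absorb_right L e = e"
    unfolding absorb_left_def absorb_right_def using assms by (auto intro!: map_idI)
  then show ?thesis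
    using rate_pos by (simp add: step_kernel_def bond_step_absorbed[OF assms] total_rate_def)
qed

lemma kpow_Suc_0: "u \<in> states L (length s) \<Longrightarrow> kpow (Suc 0) s u = step s u"
  by (simp add: if_distrib[of "\<lambda>c. _ * c"] cong: if_cong)

lemma kpow_absorbed_Suc_ge:
  assumes e: "set e \<subseteq> {Dm, Dp}" and s: "s \<in> states L (length e)"
  shows "kpow j s e \<le> kpow (Suc j) s e"
proof -
  have "kpow j s e = kpow j s e * kpow (Suc 0) e e"
    using step_absorbed[OF e] kpow_Suc_0[OF absorbed_in_states[OF e]] by simp
  also have "\<dots> \<le> (\<Sum>w\<in>states L (length e). kpow j s w * kpow (Suc 0) w e)"
    by (intro member_le_sum[OF absorbed_in_states[OF e]] mult_nonneg_nonneg kpow_nonneg) auto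
  also have "\<dots> = kpow (Suc j) s e"
    using kernel_pow_add[OF s, where A = A and B = B and a = a and b = b and j = j and D = 1] by simp
  finally show ?thesis .
qed

lemma kpow_absorbed_self: "set e \<subseteq> {Dm, Dp} \<Longrightarrow> kpow j e e = 1"
proof (induction j)
  case (Suc j)
  then show ?case
    using kpow_absorbed_Suc_ge[OF Suc.prems absorbed_in_states[OF Suc.prems], of j]
      kpow_le_1[OF absorbed_in_states[OF Suc.prems], of "Suc j" e] by linarith
qed simp

lemma tendsto_trans_prob:
  assumes "(\<lambda>j. kpow j s u) \<longlonglongrightarrow> q"
  shows "((\<lambda>t. trans_prob L A B a b t s u) \<longlongrightarrow> q) at_top"
proof -
  have "filterlim (\<lambda>t. rate * t) at_top at_top"
    by (rule filterlim_tendsto_pos_mult_at_top[OF tendsto_const rate_pos filterlim_ident])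
  then show ?thesis
    unfolding trans_prob_eq using filterlim_compose[OF tendsto_poisson_mixture[OF assms]] by blast
qed

lemma kpow_tendsto_p_L:
  assumes x: "\<forall>xi \<in> set x. - int L \<le> xi \<and> xi \<le> int L"
    and e: "set e \<subseteq> {Dm, Dp}" "length e = length x"
  shows "(\<lambda>j. kpow j (map S x) e) \<longlonglongrightarrow> p_L L A B a b x e"
proof -
  have s: "map S x \<in> states L (length e)"
    using map_S_in_states[OF x] e(2) by simp
  have "incseq (\<lambda>j. kpow j (map S x) e)"
    by (rule incseq_SucI) (rule kpow_absorbed_Suc_ge[OF e(1) s])
  then obtain q where q: "(\<lambda>j. kpow j (map S x) e) \<longlonglongrightarrow> q"
    using incseq_convergent kpow_le_1[OF s] by metis
  then have "p_L L A B a b x e = q"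
    unfolding p_L_def by (rule tendsto_Lim[rotated, OF tendsto_trans_prob]) simp
  then show ?thesis using q by simp
qed

definition escape_rate :: real where
  "escape_rate = min (1 / 2) (A / real L powr a) / rate"

lemma escape_rate_pos: "0 < escape_rate"
  using rate_pos A_pos L_pos by (simp add: escape_rate_def)

lemma escape_rate_le_1: "escape_rate \<le> 1"
proof -
  have "1 \<le> rate"
    using L_pos A_pos B_pos by (simp add: total_rate_def add_increasing2)
  then show ?thesis
    unfolding escape_rate_def by (simp add: divide_le_eq min_le_iff_disj)
qed

lemma escape_rate_le_step_left:
  assumes "- int L < k" "k \<le> int L"
  shows "escape_rate \<le> step [S k] [S (k - 1)]"
proof -
  have "bond_set (k - 1) [S k] = {0}" by (auto simp: bond_set_def)
  moreover have "bond_split (k - 1) [S k] {0} = [S (k - 1)]"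
    by (simp add: bond_split_def \<open>bond_set (k - 1) [S k] = {0}\<close>)
  ultimately have half: "pmf (bond_step (k - 1) [S k]) [S (k - 1)] = 1 / 2"
    using pmf_bond_step_bond_split[of "{0}" "k - 1" "[S k]"] by (simp add: split_weight_def)
  have "1 / 2 \<le> (\<Sum>k'\<in>{- int L .. int L - 1}. pmf (bond_step k' [S k]) [S (k - 1)])"
    unfolding half[symmetric] by (rule member_le_sum) (use assms in auto)
  also have "\<dots> \<le> (\<Sum>k'\<in>{- int L .. int L - 1}. pmf (bond_step k' [S k]) [S (k - 1)])
      + A / real L powr a * (if absorb_left L [S k] = [S (k - 1)] then 1 else 0)
      + B / real L powr b * (if absorb_right L [S k] = [S (k - 1)] then 1 else 0)"
    using A_pos B_pos by simp
  finally have "1 / 2 / rate \<le> step [S k] [S (k - 1)]"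
    unfolding step_kernel_def by (rule divide_right_mono) (use rate_pos in simp)
  moreover have "escape_rate \<le> 1 / 2 / rate"
    unfolding escape_rate_def by (rule divide_right_mono[OF min.cobounded1]) (use rate_pos in simp)
  ultimately show ?thesis by linarith
qed

lemma escape_rate_le_step_absorb: "escape_rate \<le> step [S (- int L)] [Dm]"
proof -
  have "A / real L powr a \<le> (\<Sum>k'\<in>{- int L .. int L - 1}. pmf (bond_step k' [S (- int L)]) [Dm])
      + A / real L powr a * (if absorb_left L [S (- int L)] = [Dm] then 1 else 0)
      + B / real L powr b * (if absorb_right L [S (- int L)] = [Dm] then 1 else 0)"
    using B_pos by (simp add: absorb_left_def sum_nonneg)
  then have "A / real L powr a / rate \<le> step [S (- int L)] [Dm]"
    unfolding step_kernel_def by (rule divide_right_mono) (use rate_pos in simp)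
  moreover have "escape_rate \<le> A / real L powr a / rate"
    unfolding escape_rate_def by (rule divide_right_mono[OF min.cobounded2]) (use rate_pos in simp)
  ultimately show ?thesis by linarith
qed

text \<open>Walking left one site per step and then jumping into \<open>\<delta>(-)\<close> has probability
  at least \<open>escape_rate\<close> per step.\<close>

lemma escape_rate_power_le_kpow_Dm:
  "- int L \<le> k \<Longrightarrow> k \<le> int L \<Longrightarrow> nat (k + int L) < j \<Longrightarrow> escape_rate ^ j \<le> kpow j [S k] [Dm]"
proof (induction j arbitrary: k)
  case (Suc j)
  obtain w where w: "w \<in> states L (Suc 0)" "escape_rate \<le> step [S k] w" "escape_rate ^ j \<le> kpow j w [Dm]"
  proof (cases "k = - int L")
    case True
    have "escape_rate ^ j \<le> kpow j [Dm] [Dm]"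
      using kpow_absorbed_self[of "[Dm]"] escape_rate_pos escape_rate_le_1 by (simp add: power_le_one)
    then show ?thesis
      using that[of "[Dm]"] escape_rate_le_step_absorb True by (simp add: states_def sites_def)
  next
    case False
    then have "- int L < k" using Suc.prems by simp
    then show ?thesis
      using that[of "[S (k - 1)]"] Suc escape_rate_le_step_left by (simp add: states_def sites_def)
  qed
  have "escape_rate ^ Suc j \<le> step [S k] w * kpow j w [Dm]"
    using w escape_rate_pos by (simp add: mult_mono)
  also have "\<dots> \<le> (\<Sum>w\<in>states L (Suc 0). step [S k] w * kpow j w [Dm])"
    by (intro member_le_sum[OF w(1)] mult_nonneg_nonneg step_nonneg kpow_nonneg) simp
  also have "\<dots> = kpow (Suc j) [S k] [Dm]"
    by simp
  finally show ?case .
qed simp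

definition absorbed_prob :: "nat \<Rightarrow> site list \<Rightarrow> real" where
  "absorbed_prob j s = kpow j s [Dm] + kpow j s [Dp]"

lemma absorbed_prob_add:
  "s \<in> states L n \<Longrightarrow> absorbed_prob (j + D) s = (\<Sum>w\<in>states L n. kpow j s w * absorbed_prob D w)"
  unfolding absorbed_prob_def kernel_pow_add[where s = s] by (simp add: distrib_left sum.distrib)

lemma absorbed_prob_le_1:
  assumes "s \<in> states L (Suc 0)"
  shows "absorbed_prob j s \<le> 1"
proof -
  have "absorbed_prob j s = (\<Sum>u\<in>{[Dm], [Dp]}. kpow j s u)"
    by (simp add: absorbed_prob_def)
  also have "\<dots> \<le> (\<Sum>u\<in>states L (Suc 0). kpow j s u)"
    by (rule sum_mono2[OF finite_states]) (auto simp: states_def sites_def kpow_nonneg)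
  also have "\<dots> = 1" by (rule sum_kpow[OF assms])
  finally show ?thesis .
qed

lemma incseq_absorbed_prob: "s \<in> states L (Suc 0) \<Longrightarrow> incseq (\<lambda>j. absorbed_prob j s)"
  unfolding absorbed_prob_def
  by (intro incseq_SucI add_mono kpow_absorbed_Suc_ge) auto

lemma absorbed_prob_ge:
  assumes "w \<in> states L (Suc 0)"
  shows "escape_rate ^ Suc (2 * L) + (1 - escape_rate ^ Suc (2 * L)) * absorbed_prob 0 w
           \<le> absorbed_prob (Suc (2 * L)) w"
proof -
  let ?D = "Suc (2 * L)"
  obtain z where z: "w = [z]" "z \<in> sites L"
    using assms by (auto simp: states_def length_Suc_conv)
  have absorbed: "kpow ?D [z] [z] = 1" if "z \<in> {Dm, Dp}"
    by (rule kpow_absorbed_self) (use that in auto)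
  show ?thesis
  proof (cases "z \<in> {Dm, Dp}")
    case True
    then show ?thesis
      using absorbed[OF True] kpow_nonneg[of ?D "[z]"] unfolding z(1) absorbed_prob_def
      by (auto simp del: kernel_pow.simps(2))
  next
    case False
    then obtain k where k: "z = S k" "- int L \<le> k" "k \<le> int L"
      using z(2) by (auto simp: sites_def)
    then have "escape_rate ^ ?D \<le> kpow ?D [S k] [Dm]"
      by (intro escape_rate_power_le_kpow_Dm) auto
    then show ?thesis
      using kpow_nonneg[of ?D "[S k]" "[Dp]"] unfolding z(1) k(1) absorbed_prob_def
      by (simp del: kernel_pow.simps(2))
  qed
qed

lemma absorbed_prob_step_ge:
  assumes s: "s \<in> states L (Suc 0)"
  shows "escape_rate ^ Suc (2 * L) + (1 - escape_rate ^ Suc (2 * L)) * absorbed_prob j s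
           \<le> absorbed_prob (j + Suc (2 * L)) s"
proof -
  let ?c = "escape_rate ^ Suc (2 * L)"
  have "?c + (1 - ?c) * absorbed_prob j s
      = ?c * (\<Sum>w\<in>states L (Suc 0). kpow j s w)
        + (1 - ?c) * (\<Sum>w\<in>states L (Suc 0). kpow j s w * absorbed_prob 0 w)"
    using sum_kpow[OF s, of j] absorbed_prob_add[OF s, of j 0] by simp
  also have "\<dots> = (\<Sum>w\<in>states L (Suc 0). ?c * kpow j s w + (1 - ?c) * (kpow j s w * absorbed_prob 0 w))"
    by (simp add: sum_distrib_left sum.distrib)
  also have "\<dots> = (\<Sum>w\<in>states L (Suc 0). kpow j s w * (?c + (1 - ?c) * absorbed_prob 0 w))"
    by (intro sum.cong refl) (simp add: algebra_simps)
  also have "\<dots> \<le> (\<Sum>w\<in>states L (Suc 0). kpow j s w * absorbed_prob (Suc (2 * L)) w)"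
    by (intro sum_mono mult_left_mono kpow_nonneg absorbed_prob_ge)
  also have "\<dots> = absorbed_prob (j + Suc (2 * L)) s"
    by (rule absorbed_prob_add[OF s, symmetric])
  finally show ?thesis .
qed

lemma absorbed_prob_tendsto_1:
  assumes s: "s \<in> states L (Suc 0)"
  shows "(\<lambda>j. absorbed_prob j s) \<longlonglongrightarrow> 1"
proof -
  let ?c = "escape_rate ^ Suc (2 * L)"
  obtain l where l: "(\<lambda>j. absorbed_prob j s) \<longlonglongrightarrow> l"
    using incseq_convergent[OF incseq_absorbed_prob[OF s]] absorbed_prob_le_1[OF s] by metis
  have "l \<le> 1"
    using absorbed_prob_le_1[OF s] by (intro LIMSEQ_le_const2[OF l]) auto
  have "?c + (1 - ?c) * l \<le> l"
    using absorbed_prob_step_ge[OF s]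
    by (intro LIMSEQ_le[OF tendsto_add[OF tendsto_const tendsto_mult[OF tendsto_const l]]
          LIMSEQ_ignore_initial_segment[OF l, of "Suc (2 * L)"]]) blast
  then have "?c * (1 - l) \<le> 0" by (simp add: algebra_simps)
  moreover have "0 < ?c" using escape_rate_pos by (rule zero_less_power)
  ultimately have "1 - l \<le> 0" by (meson mult_pos_pos not_le)
  with \<open>l \<le> 1\<close> have "l = 1" by simp
  with l show ?thesis by simp
qed

lemma survival_tendsto_0:
  assumes "- int L \<le> k0" "k0 \<le> int L"
  shows "(\<lambda>j. \<Sum>k\<in>{- int L .. int L}. kpow j [S k0] [S k]) \<longlonglongrightarrow> 0"
proof -
  have s: "[S k0] \<in> states L (Suc 0)" using assms by (simp add: states_def sites_def)
  have states_1: "states L (Suc 0) = (\<lambda>k. [S k]) ` {- int L .. int L} \<union> {[Dm], [Dp]}"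
    by (auto simp: states_def sites_def length_Suc_conv)
  have "1 = (\<Sum>u\<in>(\<lambda>k. [S k]) ` {- int L .. int L}. kpow j [S k0] u) + (\<Sum>u\<in>{[Dm], [Dp]}. kpow j [S k0] u)" for j
    using sum_kpow[OF s, of j] unfolding states_1 by (subst (asm) sum.union_disjoint) auto
  then have "1 = (\<Sum>k\<in>{- int L .. int L}. kpow j [S k0] [S k]) + absorbed_prob j [S k0]" for j
    by (simp add: sum.reindex inj_on_def absorbed_prob_def)
  then have "(\<lambda>j. \<Sum>k\<in>{- int L .. int L}. kpow j [S k0] [S k]) = (\<lambda>j. 1 - absorbed_prob j [S k0])"
    by (simp add: fun_eq_iff algebra_simps)
  also have "\<dots> \<longlonglongrightarrow> 1 - 1"
    by (intro tendsto_diff tendsto_const absorbed_prob_tendsto_1[OF s])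
  finally show ?thesis by simp
qed

lemma kpow_delete_eq_sum:
  assumes s: "s \<in> states L n" and e: "set e \<subseteq> {Dm, Dp}" "length e = n" and i: "i < n"
  shows "kpow j (take i s @ drop (Suc i) s) (take i e @ drop (Suc i) e)
       = (\<Sum>z\<in>sites L. kpow j s (e[i := z]))"
proof -
  let ?ps = "[0..<i] @ [Suc i..<n]"
  have proj_ps: "proj ?ps u = take i u @ drop (Suc i) u" if "u \<in> states L n" for u
    using proj_delete[of i u] i length_states[OF that] by simp
  have "kpow j (take i s @ drop (Suc i) s) (take i e @ drop (Suc i) e)
      = (\<Sum>u | u \<in> states L n \<and> proj ?ps u = take i e @ drop (Suc i) e. kpow j s u)"
    using sum_fibre_kernel_pow[OF s, where ps = ?ps and A = A and B = B and a = a and b = b] proj_ps[OF s] i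
    by (simp add: subset_iff)
  also have "{u. u \<in> states L n \<and> proj ?ps u = take i e @ drop (Suc i) e} = (\<lambda>z. e[i := z]) ` sites L"
    unfolding fibre_delete[OF e i, symmetric] using proj_ps by (intro Collect_cong) auto
  also have "(\<Sum>u\<in>\<dots>. kpow j s u) = (\<Sum>z\<in>sites L. kpow j s (e[i := z]))"
    using e(2) i by (subst sum.reindex) (auto simp: inj_on_def dest: arg_cong[where f = "\<lambda>u. u ! i"])
  finally show ?thesis .
qed

lemma kpow_update_le:
  assumes s: "s \<in> states L n" and e: "set e \<subseteq> {Dm, Dp}" "length e = n" and i: "i < n"
    and z: "z \<in> sites L"
  shows "kpow j s (e[i := z]) \<le> kpow j [s ! i] [z]"
proof -
  have "e[i := z] \<in> {u. u \<in> states L n \<and> proj [i] u = [z]}"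
    using fibre_delete[OF e i] z e(2) i by (auto simp: proj_def)
  then have "kpow j s (e[i := z]) \<le> (\<Sum>u | u \<in> states L n \<and> proj [i] u = [z]. kpow j s u)"
    by (intro member_le_sum kpow_nonneg) auto
  also have "\<dots> = kpow j [s ! i] [z]"
    using sum_fibre_kernel_pow[OF s, where ps = "[i]" and v = "[z]" and A = A and B = B and a = a and b = b] i
    by (simp add: proj_def)
  finally show ?thesis .
qed

theorem p_L_marginal:
  assumes x: "\<forall>xi \<in> set x. - int L \<le> xi \<and> xi \<le> int L"
    and i: "i < length x" and e: "length e = length x" "set e \<subseteq> {Dm, Dp}"
  shows "p_L L A B a b x (e[i := Dm]) + p_L L A B a b x (e[i := Dp])
       = p_L L A B a b (take i x @ drop (Suc i) x) (take i e @ drop (Suc i) e)"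
proof -
  let ?s = "map S x" and ?x' = "take i x @ drop (Suc i) x" and ?e' = "take i e @ drop (Suc i) e"
  define r where "r j = (\<Sum>k\<in>{- int L .. int L}. kpow j ?s (e[i := S k]))" for j
  have s: "?s \<in> states L (length x)" by (rule map_S_in_states[OF x])
  have x_i: "- int L \<le> x ! i" "x ! i \<le> int L" using x i by auto
  have decomp: "kpow j (map S ?x') ?e' = kpow j ?s (e[i := Dm]) + kpow j ?s (e[i := Dp]) + r j" for j
  proof -
    have "kpow j (map S ?x') ?e' = (\<Sum>z\<in>sites L. kpow j ?s (e[i := z]))"
      using kpow_delete_eq_sum[OF s e(2,1) i] by (simp add: take_map drop_map)
    also have "\<dots> = r j + (kpow j ?s (e[i := Dm]) + kpow j ?s (e[i := Dp]))"
      unfolding sites_def r_def by (subst sum.union_disjoint) (auto simp: sum.reindex inj_on_def)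
    finally show ?thesis by simp
  qed
  have "r \<longlonglongrightarrow> 0"
  proof (rule tendsto_sandwich[OF _ _ tendsto_const survival_tendsto_0[OF x_i]])
    show "\<forall>\<^sub>F j in sequentially. 0 \<le> r j"
      unfolding r_def by (simp add: sum_nonneg kpow_nonneg)
    show "\<forall>\<^sub>F j in sequentially. r j \<le> (\<Sum>k\<in>{- int L .. int L}. kpow j [S (x ! i)] [S k])"
      using kpow_update_le[OF s e(2,1) i] i unfolding r_def
      by (intro always_eventually allI sum_mono) (auto simp: sites_def)
  qed
  moreover have "set (e[i := z]) \<subseteq> {Dm, Dp}" if "z \<in> {Dm, Dp}" for z
    using e(2) that set_update_subset_insert[of e i z] by auto
  ultimately have "(\<lambda>j. kpow j (map S ?x') ?e')
      \<longlonglongrightarrow> p_L L A B a b x (e[i := Dm]) + p_L L A B a b x (e[i := Dp]) + 0"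
    unfolding decomp using e(1) by (intro tendsto_add kpow_tendsto_p_L[OF x]) auto
  moreover have "(\<lambda>j. kpow j (map S ?x') ?e') \<longlonglongrightarrow> p_L L A B a b ?x' ?e'"
    using x e by (intro kpow_tendsto_p_L) (auto dest: in_set_takeD in_set_dropD)
  ultimately show ?thesis using LIMSEQ_unique by auto
qed

end

theorem proposition4p1:
  fixes L :: nat and A B a b :: real and x :: "int list" and "is" :: "nat list"
  assumes "L > 0" and "A > 0" and "B > 0"
    and "\<forall>xi \<in> set x. - int L \<le> xi \<and> xi \<le> int L"
    and "distinct is" and "\<forall>i \<in> set is. i < length x" and "length is < length x"
  shows "(\<forall>obs :: (real \<times> site list) list.
            sorted (map fst obs) \<and> (\<forall>t \<in> fst ` set obs. 0 \<le> t) \<longrightarrow>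
            sub_fdd L A B a b x is obs
              = fdd L A B a b (map S (map (\<lambda>i. x ! i) is)) 0 obs)
       \<and> (\<forall>i eps. i < length x \<and> length eps = length x \<and> set eps \<subseteq> {Dm, Dp} \<longrightarrow>
            p_L L A B a b x (eps[i := Dm]) + p_L L A B a b x (eps[i := Dp])
              = p_L L A B a b (take i x @ drop (Suc i) x) (take i eps @ drop (Suc i) eps))"
proof -
  interpret label_process L A B a b
    using assms(1-3) by unfold_locales
  show ?thesis
    using sub_fdd_eq_fdd[OF assms(4-6)] p_L_marginal[OF assms(4)] by blast
qed

end
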